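(* Let $\psi\in C^3(\mathbb{R})$ be a known link, $\beta_c\in\mathbb{R}^p$ with $\mathbb{E}[Y_i(0)\mid X_i=x]=\psi(x^\top\beta_c)$, $\hat\beta_c\in\mathbb{R}^p$ any estimate, and $\gamma\in\mathbb{R}^{n_c}$ weights with $\gamma_i\ge0$, $\sum_{i:W_i=0}\gamma_i=1$. Suppose there are $u_n>0$, $M_2,M_3>0$ with $\sup_{|z|\le u_n}|\psi''(z)|\le M_2\log p$, $\sup_{|z|\le u_n}|\psi'''(z)|\le M_3\sqrt{n/\log p}$, and $\max_{i\le n}|X_i^\top\beta_c|\le u_n$, $\max_{i\le n}|X_i^\top\hat\beta_c|\le u_n$. Writing $\delta=\hat\beta_c-\beta_c$, there is an absolute constant $C>0$ such that \begin{align*} |\hat\mu_c-\mu_c|&\le \Big\|\tfrac{1}{n_t}X_t^\top\psi'(X_t\hat\beta_c)-X_c^\top W_c(\hat\beta_c)\gamma\Big\|_\infty\|\delta\|_1\\ &\quad+\Big\|\tfrac{1}{n_t}(X_t^\top\otimes X_t^\top)\operatorname{vec}(W_t'(\hat\beta_c))-[V_1,\dots,V_{n_c}]\gamma\Big\|_\infty\|\delta\|_1^2+|\gamma^\top\varepsilon_c|\\ &\quad+C\Big(M_2\log p\,(\|X_t\|_\infty^2+\|X_c\|_\infty^2)\|\delta\|_1^2+M_3\sqrt{\tfrac{n}{\log p}}\,(\|X_t\|_\infty^3+\|X_c\|_\infty^3)\|\delta\|_1^3\Big). \end{align*}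
   Context: Setting: $n$ units with covariates $X_i\in\mathbb{R}^p$, treatment $W_i\in\{0,1\}$, potential outcomes $Y_i(0),Y_i(1)$, observed $Y_i^{\rm obs}=Y_i(W_i)$; $n_t,n_c$ numbers of treated/control units; $X_t\in\mathbb{R}^{n_t\times p}$, $X_c\in\mathbb{R}^{n_c\times p}$ treated/control covariate matrices, with $X_{c,i}$ the $i$-th control row. Functions of vectors ($\psi'(v)$ etc.) act componentwise. $W_c(\beta)=\operatorname{diag}(\psi'(X_c\beta))$, $W_t'(\beta)=\operatorname{diag}(\psi''(X_t\beta))$, and $V_i=\psi''(X_{c,i}^\top\hat\beta_c)\,X_{c,i}\otimes X_{c,i}\in\mathbb{R}^{p^2}$, so $[V_1,\dots,V_{n_c}]\in\mathbb{R}^{p^2\times n_c}$. $\mu_c=\frac1{n_t}\sum_{i:W_i=1}\psi(X_i^\top\beta_c)$, $\hat\mu_c=\frac1{n_t}\sum_{i:W_i=1}\psi(X_i^\top\hat\beta_c)+\sum_{i:W_i=0}\gamma_i(Y_i^{\rm obs}-\psi(X_i^\top\hat\beta_c))$, $\varepsilon_c=(Y_i(0)-\psi(X_i^\top\beta_c))_{i:W_i=0}$. For matrices $\|A\|_\infty=\max_{i,j}|A_{ij}|$; $\operatorname{vec}$ stacks columns; $\otimes$ is the Kronecker product. *)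

theory Defs
  imports "HOL-Analysis.Analysis"
begin

text \<open>Units are indexed by 0..<n, covariates by 0..<p. X i j is the j-th covariate
of unit i, W i the treatment indicator, Y0 i / Y1 i the potential outcomes.
Vectors in R^p are functions nat => real (only indices < p matter).\<close>

definition lin :: "nat \<Rightarrow> (nat \<Rightarrow> real) \<Rightarrow> (nat \<Rightarrow> real) \<Rightarrow> real" where
  "lin p x b = (\<Sum>j<p. x j * b j)"

definition treated :: "nat \<Rightarrow> (nat \<Rightarrow> bool) \<Rightarrow> nat set" where
  "treated n W = {i. i < n \<and> W i}"

definition control :: "nat \<Rightarrow> (nat \<Rightarrow> bool) \<Rightarrow> nat set" where
  "control n W = {i. i < n \<and> \<not> W i}"

definition Yobs :: "(nat \<Rightarrow> bool) \<Rightarrow> (nat \<Rightarrow> real) \<Rightarrow> (nat \<Rightarrow> real) \<Rightarrow> nat \<Rightarrow> real" where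
  "Yobs W Y0 Y1 i = (if W i then Y1 i else Y0 i)"

definition l1norm :: "nat \<Rightarrow> (nat \<Rightarrow> real) \<Rightarrow> real" where
  "l1norm p v = (\<Sum>j<p. \<bar>v j\<bar>)"

definition vsup :: "nat \<Rightarrow> (nat \<Rightarrow> real) \<Rightarrow> real" where
  "vsup p v = Max (insert 0 {\<bar>v j\<bar> | j. j < p})"

text \<open>max-abs-entry norm of a vector in R^(p^2), indexed by pairs (j,k)\<close>
definition vsup2 :: "nat \<Rightarrow> (nat \<Rightarrow> nat \<Rightarrow> real) \<Rightarrow> real" where
  "vsup2 p v = Max (insert 0 {\<bar>v j k\<bar> | j k. j < p \<and> k < p})"

definition msup :: "nat set \<Rightarrow> nat \<Rightarrow> (nat \<Rightarrow> nat \<Rightarrow> real) \<Rightarrow> real" where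
  "msup S p X = Max (insert 0 {\<bar>X i j\<bar> | i j. i \<in> S \<and> j < p})"

definition mu_c where
  "mu_c n p W X (\<psi>::real\<Rightarrow>real) \<beta> =
     (1 / real (card (treated n W))) * (\<Sum>i\<in>treated n W. \<psi> (lin p (X i) \<beta>))"

definition muhat_c where
  "muhat_c n p W X Y0 Y1 (\<psi>::real\<Rightarrow>real) \<beta>h (\<gamma>::nat\<Rightarrow>real) =
     (1 / real (card (treated n W))) * (\<Sum>i\<in>treated n W. \<psi> (lin p (X i) \<beta>h))
     + (\<Sum>i\<in>control n W. \<gamma> i * (Yobs W Y0 Y1 i - \<psi> (lin p (X i) \<beta>h)))"

definition gamma_eps where
  "gamma_eps n p W X Y0 (\<psi>::real\<Rightarrow>real) \<beta> (\<gamma>::nat\<Rightarrow>real) =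
     (\<Sum>i\<in>control n W. \<gamma> i * (Y0 i - \<psi> (lin p (X i) \<beta>)))"

text \<open>j-th entry of (1/n_t) X_t^T psi'(X_t betahat) - X_c^T W_c(betahat) gamma\<close>
definition grad_imb where
  "grad_imb n p W X (\<psi>1::real\<Rightarrow>real) \<beta>h (\<gamma>::nat\<Rightarrow>real) j =
     (1 / real (card (treated n W))) * (\<Sum>i\<in>treated n W. X i j * \<psi>1 (lin p (X i) \<beta>h))
     - (\<Sum>i\<in>control n W. X i j * \<psi>1 (lin p (X i) \<beta>h) * \<gamma> i)"

text \<open>(j,k)-entry of (1/n_t)(X_t^T \<otimes> X_t^T) vec(W_t'(betahat)) - [V_1..V_nc] gamma;
  note (X_t^T \<otimes> X_t^T) vec(D) = vec(X_t^T D X_t) and V_i = psi''(.) X_ci \<otimes> X_ci.\<close>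
definition hess_imb where
  "hess_imb n p W X (\<psi>2::real\<Rightarrow>real) \<beta>h (\<gamma>::nat\<Rightarrow>real) j k =
     (1 / real (card (treated n W))) * (\<Sum>i\<in>treated n W. X i j * \<psi>2 (lin p (X i) \<beta>h) * X i k)
     - (\<Sum>i\<in>control n W. \<psi>2 (lin p (X i) \<beta>h) * X i j * X i k * \<gamma> i)"

end

theory Submission
  imports Defs
begin

text \<open>With a_i = X_i^T betahat and d_i = X_i^T delta, Taylor's theorem at a_i gives
  psi(a_i) - psi(X_i^T beta_c) = psi'(a_i) d_i - psi''(a_i) d_i^2 / 2 + r_i, where r_i is at most
  sup |psi'''| |d_i|^3 / 6 in absolute value. Up to gamma^T eps_c, the error muhat_c - mu_c is
  the image of these differences under the linear functional
  f \<mapsto> (1/n_t) sum_treated f_i - sum_control gamma_i f_i. On the first- and second-order terms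
  this functional yields exactly delta^T g and delta^T H delta for the two imbalance vectors g
  and H, which Hoelder's inequality bounds by ||g||_inf ||delta||_1 and ||H||_inf ||delta||_1^2; on
  the remainders it is at most their largest bound, as gamma is a probability vector.\<close>

lemma taylor3_remainder_bound:
  fixes \<psi> \<psi>1 \<psi>2 \<psi>3 :: "real \<Rightarrow> real"
  assumes "\<And>z. (\<psi> has_real_derivative \<psi>1 z) (at z)"
    and "\<And>z. (\<psi>1 has_real_derivative \<psi>2 z) (at z)"
    and "\<And>z. (\<psi>2 has_real_derivative \<psi>3 z) (at z)"
    and bound: "\<And>t. min a b \<le> t \<Longrightarrow> t \<le> max a b \<Longrightarrow> \<bar>\<psi>3 t\<bar> \<le> K"
  shows "\<bar>\<psi> b - \<psi> a - \<psi>1 a * (b - a) - \<psi>2 a / 2 * (b - a)\<^sup>2\<bar> \<le> K / 6 * \<bar>b - a\<bar> ^ 3"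
proof (cases "a = b")
  case True
  then show ?thesis by simp
next
  case False
  define diff where "diff m = [\<psi>, \<psi>1, \<psi>2, \<psi>3] ! m" for m
  have "\<forall>m t. m < 3 \<and> min a b \<le> t \<and> t \<le> max a b \<longrightarrow> DERIV (diff m) t :> diff (Suc m) t"
    using assms(1-3) by (auto simp: diff_def less_Suc_eq numeral_3_eq_3)
  from Taylor[of 3 diff \<psi> "min a b" "max a b" a b, OF _ _ this] False
  obtain t where "if b < a then b < t \<and> t < a else a < t \<and> t < b"
    and expansion: "\<psi> b = (\<Sum>m<3. diff m a / fact m * (b - a) ^ m) + diff 3 t / fact 3 * (b - a) ^ 3"
    by (auto simp: diff_def)
  then have t: "min a b \<le> t" "t \<le> max a b"
    by (auto split: if_splits)
  have "\<psi> b - \<psi> a - \<psi>1 a * (b - a) - \<psi>2 a / 2 * (b - a)\<^sup>2 = \<psi>3 t / 6 * (b - a) ^ 3"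
    using expansion by (simp add: diff_def numeral_3_eq_3 fact_numeral power2_eq_square)
  also have "\<bar>\<dots>\<bar> \<le> K / 6 * \<bar>b - a\<bar> ^ 3"
    using bound[OF t] by (simp add: abs_mult power_abs mult_right_mono)
  finally show ?thesis .
qed

lemma lin_diff: "lin p x a - lin p x b = lin p x (\<lambda>j. a j - b j)"
  by (simp add: lin_def sum_subtractf[symmetric] algebra_simps)

lemma vsup_ge: "j < p \<Longrightarrow> \<bar>v j\<bar> \<le> vsup p v"
  unfolding vsup_def by (rule Max_ge) auto

lemma vsup2_ge: "j < p \<Longrightarrow> k < p \<Longrightarrow> \<bar>v j k\<bar> \<le> vsup2 p v"
  unfolding vsup2_def by (rule Max_ge) (auto intro: finite_image_set2)

lemma vsup2_nonneg: "0 \<le> vsup2 p v"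
  unfolding vsup2_def by (rule Max_ge) (auto intro: finite_image_set2)

lemma msup_ge: "finite S \<Longrightarrow> i \<in> S \<Longrightarrow> j < p \<Longrightarrow> \<bar>X i j\<bar> \<le> msup S p X"
  unfolding msup_def by (rule Max_ge) (auto intro: finite_image_set2)

lemma msup_nonneg: "finite S \<Longrightarrow> 0 \<le> msup S p X"
  unfolding msup_def by (rule Max_ge) (auto intro: finite_image_set2)

lemma l1norm_nonneg: "0 \<le> l1norm p v"
  unfolding l1norm_def by (simp add: sum_nonneg)

lemma abs_lin_le_msup_l1norm:
  assumes "finite S" "i \<in> S"
  shows "\<bar>lin p (X i) d\<bar> \<le> msup S p X * l1norm p d"
proof -
  have "\<bar>lin p (X i) d\<bar> \<le> (\<Sum>j<p. \<bar>X i j\<bar> * \<bar>d j\<bar>)"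
    unfolding lin_def by (rule order_trans[OF sum_abs]) (simp add: abs_mult)
  also have "\<dots> \<le> (\<Sum>j<p. msup S p X * \<bar>d j\<bar>)"
    using assms by (intro sum_mono mult_right_mono msup_ge) auto
  finally show ?thesis by (simp add: l1norm_def sum_distrib_left)
qed

lemma abs_sum_mult_le_vsup_l1norm: "\<bar>\<Sum>j<p. d j * g j\<bar> \<le> vsup p g * l1norm p d"
proof -
  have "\<bar>\<Sum>j<p. d j * g j\<bar> \<le> (\<Sum>j<p. \<bar>d j\<bar> * vsup p g)"
    by (rule order_trans[OF sum_abs], rule sum_mono) (auto simp: abs_mult intro: mult_left_mono vsup_ge)
  then show ?thesis by (simp add: l1norm_def sum_distrib_left mult.commute)
qed

lemma abs_quadform_le_vsup2_l1norm:
  "\<bar>\<Sum>j<p. \<Sum>k<p. d j * d k * h j k\<bar> \<le> vsup2 p h * (l1norm p d)\<^sup>2"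
proof -
  have "\<bar>\<Sum>j<p. \<Sum>k<p. d j * d k * h j k\<bar> \<le> (\<Sum>j<p. \<Sum>k<p. \<bar>d j\<bar> * \<bar>d k\<bar> * vsup2 p h)"
    by (rule order_trans[OF sum_abs], rule sum_mono, rule order_trans[OF sum_abs], rule sum_mono)
      (auto simp: abs_mult intro: mult_left_mono vsup2_ge)
  then show ?thesis
    by (simp add: l1norm_def power2_eq_square sum_distrib_right sum_distrib_left mult_ac)
qed

definition contrast :: "nat \<Rightarrow> (nat \<Rightarrow> bool) \<Rightarrow> (nat \<Rightarrow> real) \<Rightarrow> (nat \<Rightarrow> real) \<Rightarrow> real" where
  "contrast n W \<gamma> f =
     (1 / real (card (treated n W))) * (\<Sum>i\<in>treated n W. f i) - (\<Sum>i\<in>control n W. \<gamma> i * f i)"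

lemma contrast_add: "contrast n W \<gamma> (\<lambda>i. f i + g i) = contrast n W \<gamma> f + contrast n W \<gamma> g"
  by (simp add: contrast_def sum.distrib algebra_simps)

lemma contrast_diff: "contrast n W \<gamma> (\<lambda>i. f i - g i) = contrast n W \<gamma> f - contrast n W \<gamma> g"
  by (simp add: contrast_def sum_subtractf algebra_simps)

lemma contrast_mult_left: "contrast n W \<gamma> (\<lambda>i. a * f i) = a * contrast n W \<gamma> f"
  by (simp add: contrast_def sum_distrib_left sum_divide_distrib algebra_simps)

lemma contrast_sum: "contrast n W \<gamma> (\<lambda>i. \<Sum>j\<in>J. f j i) = (\<Sum>j\<in>J. contrast n W \<gamma> (f j))"
  by (simp add: contrast_def sum_subtractf sum_distrib_left sum.swap[of _ J])

lemma abs_contrast_le: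
  assumes "\<forall>i\<in>control n W. 0 \<le> \<gamma> i" "(\<Sum>i\<in>control n W. \<gamma> i) = 1" "0 \<le> A"
    and "\<And>i. i \<in> treated n W \<Longrightarrow> \<bar>f i\<bar> \<le> A"
    and "\<And>i. i \<in> control n W \<Longrightarrow> \<bar>f i\<bar> \<le> B"
  shows "\<bar>contrast n W \<gamma> f\<bar> \<le> A + B"
proof -
  have "\<bar>\<Sum>i\<in>treated n W. f i\<bar> \<le> real (card (treated n W)) * A"
    using assms(4) by (intro order_trans[OF sum_abs] sum_bounded_above) auto
  then have treated_part: "\<bar>1 / real (card (treated n W)) * (\<Sum>i\<in>treated n W. f i)\<bar> \<le> A"
    using \<open>0 \<le> A\<close> by (cases "card (treated n W) = 0") (auto simp: field_simps)
  have "\<bar>\<Sum>i\<in>control n W. \<gamma> i * f i\<bar> \<le> (\<Sum>i\<in>control n W. \<gamma> i * B)"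
    using assms(1,5) by (intro order_trans[OF sum_abs] sum_mono) (auto simp: abs_mult intro: mult_left_mono)
  also have "\<dots> = B"
    using assms(2) by (simp add: sum_distrib_right[symmetric])
  finally show ?thesis
    using treated_part unfolding contrast_def by linarith
qed

lemma contrast_mult_lin:
  "contrast n W \<gamma> (\<lambda>i. h i * lin p (X i) d) = (\<Sum>j<p. d j * contrast n W \<gamma> (\<lambda>i. X i j * h i))"
proof -
  have "(\<lambda>i. h i * lin p (X i) d) = (\<lambda>i. \<Sum>j<p. d j * (X i j * h i))"
    by (simp add: lin_def sum_distrib_left mult_ac)
  then show ?thesis by (simp add: contrast_sum contrast_mult_left)
qed

lemma contrast_mult_lin_square:
  "contrast n W \<gamma> (\<lambda>i. h i * (lin p (X i) d)\<^sup>2)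
     = (\<Sum>j<p. \<Sum>k<p. d j * d k * contrast n W \<gamma> (\<lambda>i. X i j * X i k * h i))"
proof -
  have "(\<lambda>i. h i * (lin p (X i) d)\<^sup>2) = (\<lambda>i. \<Sum>j<p. \<Sum>k<p. d j * d k * (X i j * X i k * h i))"
    by (simp add: lin_def power2_eq_square sum_product sum_distrib_left mult_ac)
  then show ?thesis by (simp add: contrast_sum contrast_mult_left)
qed

lemma grad_imb_eq_contrast:
  "grad_imb n p W X \<psi>1 \<beta> \<gamma> j = contrast n W \<gamma> (\<lambda>i. X i j * \<psi>1 (lin p (X i) \<beta>))"
  by (simp add: grad_imb_def contrast_def mult_ac)

lemma hess_imb_eq_contrast:
  "hess_imb n p W X \<psi>2 \<beta> \<gamma> j k = contrast n W \<gamma> (\<lambda>i. X i j * X i k * \<psi>2 (lin p (X i) \<beta>))"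
  by (simp add: hess_imb_def contrast_def mult_ac)

lemma muhat_c_minus_mu_c:
  "muhat_c n p W X Y0 Y1 \<psi> \<beta>h \<gamma> - mu_c n p W X \<psi> \<beta>c
     = contrast n W \<gamma> (\<lambda>i. \<psi> (lin p (X i) \<beta>h) - \<psi> (lin p (X i) \<beta>c)) + gamma_eps n p W X Y0 \<psi> \<beta>c \<gamma>"
proof -
  have "Yobs W Y0 Y1 i = Y0 i" if "i \<in> control n W" for i
    using that by (simp add: Yobs_def control_def)
  then show ?thesis
    by (simp add: muhat_c_def mu_c_def contrast_def gamma_eps_def sum_subtractf algebra_simps
        cong: sum.cong)
qed

lemma muhat_c_error_bound:
  fixes \<psi> \<psi>1 \<psi>2 \<psi>3 :: "real \<Rightarrow> real"
  assumes "\<And>z. (\<psi> has_real_derivative \<psi>1 z) (at z)"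
    and "\<And>z. (\<psi>1 has_real_derivative \<psi>2 z) (at z)"
    and "\<And>z. (\<psi>2 has_real_derivative \<psi>3 z) (at z)"
    and weights: "\<forall>i\<in>control n W. 0 \<le> \<gamma> i" "(\<Sum>i\<in>control n W. \<gamma> i) = 1"
    and "0 \<le> K" and third_deriv_bound: "\<And>z. \<bar>z\<bar> \<le> u \<Longrightarrow> \<bar>\<psi>3 z\<bar> \<le> K"
    and index_c: "\<And>i. i < n \<Longrightarrow> \<bar>lin p (X i) \<beta>c\<bar> \<le> u"
    and index_h: "\<And>i. i < n \<Longrightarrow> \<bar>lin p (X i) \<beta>h\<bar> \<le> u"
  defines "\<delta> \<equiv> \<lambda>j. \<beta>h j - \<beta>c j"
  shows "\<bar>muhat_c n p W X Y0 Y1 \<psi> \<beta>h \<gamma> - mu_c n p W X \<psi> \<beta>c\<bar>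
       \<le> vsup p (grad_imb n p W X \<psi>1 \<beta>h \<gamma>) * l1norm p \<delta>
        + vsup2 p (hess_imb n p W X \<psi>2 \<beta>h \<gamma>) * (l1norm p \<delta>)\<^sup>2
        + \<bar>gamma_eps n p W X Y0 \<psi> \<beta>c \<gamma>\<bar>
        + K / 6 * ((msup (treated n W) p X)^3 + (msup (control n W) p X)^3) * (l1norm p \<delta>)^3"
proof -
  define a where "a i = lin p (X i) \<beta>h" for i
  define d where "d i = lin p (X i) \<delta>" for i
  define rem where "rem i = \<psi> (a i) - \<psi> (lin p (X i) \<beta>c) - \<psi>1 (a i) * d i + 1 / 2 * (\<psi>2 (a i) * (d i)\<^sup>2)" for i
  define l where "l = l1norm p \<delta>"
  have rem_bound: "\<bar>rem i\<bar> \<le> K / 6 * \<bar>d i\<bar> ^ 3" if "i < n" for i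
  proof -
    define b where "b = lin p (X i) \<beta>c"
    have "b - a i = - d i"
      using lin_diff[of p "X i" \<beta>h \<beta>c] by (simp add: a_def b_def d_def \<delta>_def)
    then have "rem i = - (\<psi> b - \<psi> (a i) - \<psi>1 (a i) * (b - a i) - \<psi>2 (a i) / 2 * (b - a i)\<^sup>2)"
      by (simp add: rem_def b_def)
    also have "\<bar>\<dots>\<bar> \<le> K / 6 * \<bar>b - a i\<bar> ^ 3"
      unfolding abs_minus_cancel
    proof (rule taylor3_remainder_bound[OF assms(1-3)])
      show "\<bar>\<psi>3 t\<bar> \<le> K" if "min (a i) b \<le> t" "t \<le> max (a i) b" for t
        using that index_c[OF \<open>i < n\<close>] index_h[OF \<open>i < n\<close>]
        by (intro third_deriv_bound) (auto simp: a_def b_def)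
    qed
    finally show ?thesis
      using \<open>b - a i = - d i\<close> by simp
  qed
  have rem_le: "\<bar>rem i\<bar> \<le> K / 6 * (msup S p X * l) ^ 3" if "S \<subseteq> {..<n}" "i \<in> S" for S i
  proof -
    have "\<bar>d i\<bar> \<le> msup S p X * l"
      using that abs_lin_le_msup_l1norm[of S i p X \<delta>] finite_subset by (auto simp: d_def l_def)
    then have "K / 6 * \<bar>d i\<bar> ^ 3 \<le> K / 6 * (msup S p X * l) ^ 3"
      using \<open>0 \<le> K\<close> by (intro mult_left_mono power_mono) auto
    with rem_bound[of i] that show ?thesis by auto
  qed
  have "muhat_c n p W X Y0 Y1 \<psi> \<beta>h \<gamma> - mu_c n p W X \<psi> \<beta>c
     = contrast n W \<gamma> (\<lambda>i. \<psi>1 (a i) * d i) - 1 / 2 * contrast n W \<gamma> (\<lambda>i. \<psi>2 (a i) * (d i)\<^sup>2)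
       + contrast n W \<gamma> rem + gamma_eps n p W X Y0 \<psi> \<beta>c \<gamma>"
  proof -
    have "(\<lambda>i. \<psi> (a i) - \<psi> (lin p (X i) \<beta>c)) = (\<lambda>i. \<psi>1 (a i) * d i - 1 / 2 * (\<psi>2 (a i) * (d i)\<^sup>2) + rem i)"
      by (simp add: rem_def)
    then show ?thesis
      unfolding muhat_c_minus_mu_c a_def[symmetric] by (simp only: contrast_add contrast_diff contrast_mult_left)
  qed
  moreover have "\<bar>contrast n W \<gamma> (\<lambda>i. \<psi>1 (a i) * d i)\<bar> \<le> vsup p (grad_imb n p W X \<psi>1 \<beta>h \<gamma>) * l"
    unfolding d_def l_def a_def contrast_mult_lin grad_imb_eq_contrast[symmetric]
    by (rule abs_sum_mult_le_vsup_l1norm)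
  moreover have "\<bar>contrast n W \<gamma> (\<lambda>i. \<psi>2 (a i) * (d i)\<^sup>2)\<bar> \<le> vsup2 p (hess_imb n p W X \<psi>2 \<beta>h \<gamma>) * l\<^sup>2"
    unfolding d_def l_def a_def contrast_mult_lin_square hess_imb_eq_contrast[symmetric]
    by (rule abs_quadform_le_vsup2_l1norm)
  moreover have "\<bar>contrast n W \<gamma> rem\<bar>
      \<le> K / 6 * (msup (treated n W) p X * l) ^ 3 + K / 6 * (msup (control n W) p X * l) ^ 3"
    using weights \<open>0 \<le> K\<close> msup_nonneg[of "treated n W" p X] l1norm_nonneg[of p \<delta>]
    by (intro abs_contrast_le rem_le) (auto simp: l_def treated_def control_def)
  moreover have "0 \<le> vsup2 p (hess_imb n p W X \<psi>2 \<beta>h \<gamma>) * l\<^sup>2"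
    by (simp add: vsup2_nonneg)
  ultimately show ?thesis
    unfolding l_def[symmetric] by (simp add: power_mult_distrib algebra_simps)
qed

theorem theorem1:
  shows "\<exists>C>0. \<forall>(n::nat) (p::nat) (W::nat\<Rightarrow>bool) (X::nat\<Rightarrow>nat\<Rightarrow>real)
      (Y0::nat\<Rightarrow>real) (Y1::nat\<Rightarrow>real)
      (\<psi>::real\<Rightarrow>real) \<psi>1 \<psi>2 \<psi>3 (\<beta>c::nat\<Rightarrow>real) (\<beta>h::nat\<Rightarrow>real) (\<gamma>::nat\<Rightarrow>real)
      (u::real) (M2::real) (M3::real).
    (\<forall>z. (\<psi> has_real_derivative \<psi>1 z) (at z)) \<and>
    (\<forall>z. (\<psi>1 has_real_derivative \<psi>2 z) (at z)) \<and>
    (\<forall>z. (\<psi>2 has_real_derivative \<psi>3 z) (at z)) \<and>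
    continuous_on UNIV \<psi>3 \<and>
    (\<forall>i\<in>control n W. \<gamma> i \<ge> 0) \<and> (\<Sum>i\<in>control n W. \<gamma> i) = 1 \<and>
    u > 0 \<and> M2 > 0 \<and> M3 > 0 \<and>
    (\<forall>z. \<bar>z\<bar> \<le> u \<longrightarrow> \<bar>\<psi>2 z\<bar> \<le> M2 * ln (real p)) \<and>
    (\<forall>z. \<bar>z\<bar> \<le> u \<longrightarrow> \<bar>\<psi>3 z\<bar> \<le> M3 * sqrt (real n / ln (real p))) \<and>
    (\<forall>i<n. \<bar>lin p (X i) \<beta>c\<bar> \<le> u) \<and>
    (\<forall>i<n. \<bar>lin p (X i) \<beta>h\<bar> \<le> u)
    \<longrightarrow>
    (let \<delta> = (\<lambda>j. \<beta>h j - \<beta>c j) in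
     \<bar>muhat_c n p W X Y0 Y1 \<psi> \<beta>h \<gamma> - mu_c n p W X \<psi> \<beta>c\<bar>
       \<le> vsup p (grad_imb n p W X \<psi>1 \<beta>h \<gamma>) * l1norm p \<delta>
        + vsup2 p (hess_imb n p W X \<psi>2 \<beta>h \<gamma>) * (l1norm p \<delta>)\<^sup>2
        + \<bar>gamma_eps n p W X Y0 \<psi> \<beta>c \<gamma>\<bar>
        + C * (M2 * ln (real p) * ((msup (treated n W) p X)\<^sup>2 + (msup (control n W) p X)\<^sup>2)
                 * (l1norm p \<delta>)\<^sup>2
             + M3 * sqrt (real n / ln (real p))
                 * ((msup (treated n W) p X)^3 + (msup (control n W) p X)^3) * (l1norm p \<delta>)^3))"
proof (intro exI[of _ 1] conjI allI impI, simp, unfold Let_def, elim conjE, goal_cases)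
  case (1 n p W X Y0 Y1 \<psi> \<psi>1 \<psi>2 \<psi>3 \<beta>c \<beta>h \<gamma> u M2 M3)
  define K where "K = M3 * sqrt (real n / ln (real p))"
  define l where "l = l1norm p (\<lambda>j. \<beta>h j - \<beta>c j)"
  define mt where "mt = msup (treated n W) p X"
  define mc where "mc = msup (control n W) p X"
  have "0 \<le> ln (real p)"
    by (cases p) auto
  then have "0 \<le> K" and "0 \<le> M2 * ln (real p) * (mt\<^sup>2 + mc\<^sup>2) * l\<^sup>2"
    using 1 by (auto simp: K_def)
  moreover have "K / 6 * (mt ^ 3 + mc ^ 3) * l ^ 3 \<le> K * (mt ^ 3 + mc ^ 3) * l ^ 3"
    using \<open>0 \<le> K\<close> l1norm_nonneg msup_nonneg
    by (simp add: l_def mt_def mc_def treated_def control_def)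
  moreover have "\<bar>muhat_c n p W X Y0 Y1 \<psi> \<beta>h \<gamma> - mu_c n p W X \<psi> \<beta>c\<bar>
       \<le> vsup p (grad_imb n p W X \<psi>1 \<beta>h \<gamma>) * l + vsup2 p (hess_imb n p W X \<psi>2 \<beta>h \<gamma>) * l\<^sup>2
        + \<bar>gamma_eps n p W X Y0 \<psi> \<beta>c \<gamma>\<bar> + K / 6 * (mt ^ 3 + mc ^ 3) * l ^ 3"
    unfolding l_def mt_def mc_def
    using 1 \<open>0 \<le> K\<close> by (intro muhat_c_error_bound[where ?\<psi>3.0 = \<psi>3 and u = u]) (auto simp: K_def)
  ultimately show ?case
    unfolding K_def[symmetric] l_def[symmetric] mt_def[symmetric] mc_def[symmetric]
    by argo
qed

end
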